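(* Let $\phi=\frac{1+\sqrt5}{2}$ be the golden ratio. For every $\epsilon>0$ there exists a (weighted) instance of the atomic two-stage facility location game that admits no $(\phi-\epsilon)$-approximate subgame perfect equilibrium.
   Context: Atomic two-stage facility location game. An instance is a triple $(H,U,k)$: $H=(V,E,w)$ is a finite directed graph with vertex weights $w:V\to\mathbb{Q}_{>0}$; $F$ is a set of $k$ facility agents; $U:F\to 2^V$ assigns to each facility agent $f$ a set $U(f)\subseteq V$ of feasible locations. The vertices are simultaneously the clients and the possible locations. A facility placement profile (FPP) is a vector $\mathbf{s}=(s_f)_{f\in F}$ with $s_f\in U(f)$ (several facilities may choose the same vertex); $S$ denotes the set of all FPPs. For a client $v$ let $N(v)=\{v\}\cup\{u:(v,u)\in E\}$ and $N_{\mathbf{s}}(v)=\{f\in F: s_f\in N(v)\}$. A client profile for $\mathbf{s}$ is $\sigma(\mathbf{s})$, assigning to each client $v$ numbers $\sigma(\mathbf{s})_{v,f}\in[0,1]$ ($f\in F$) with $\sigma(\mathbf{s})_{v,f}=0$ for $f\notin N_{\mathbf{s}}(v)$ and $\sum_{f\in N_{\mathbf{s}}(v)}\sigma(\mathbf{s})_{v,f}=1$ whenever $N_{\mathbf{s}}(v)\neq\varnothing$. A full client profile $\sigma$ specifies a client profile $\sigma(\mathbf{s}')$ for every $\mathbf{s}'\in S$. The load of facility $f$ is $\ell_f(\mathbf{s},\sigma)=\sum_{v\in V}\sigma(\mathbf{s})_{v,f}w(v)$. The cost of client $v$ is $L_v(\mathbf{s},\sigma)=w(v)+\sum_{f\in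 N_{\mathbf{s}}(v)}\sigma(\mathbf{s})_{v,f}\,\ell_{-v,f}(\mathbf{s},\sigma)$ where $\ell_{-v,f}(\mathbf{s},\sigma)=\sum_{u\neq v}\sigma(\mathbf{s})_{u,f}w(u)$. $\sigma(\mathbf{s})$ is a client equilibrium if no client $v$ can strictly decrease $L_v$ by unilaterally changing her own distribution to another feasible one; $\sigma$ is a full client equilibrium if $\sigma(\mathbf{s}')$ is a client equilibrium for every $\mathbf{s}'\in S$. For a real number $\alpha$, a pair $(\mathbf{s},\sigma)$ is an $\alpha$-approximate subgame perfect equilibrium if $\sigma$ is a full client equilibrium and there is no facility $f$ and location $s'_f\in U(f)$ with $\ell_f((s'_f,\mathbf{s}_{-f}),\sigma)>\alpha\cdot\ell_f(\mathbf{s},\sigma)$ (the paper considers $\alpha\ge 1$). *)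

theory Defs
  imports Complex_Main "HOL-Library.FuncSet"
begin

text \<open>Vertices (clients = locations) are natural numbers in a finite set V, the
directed edge set is E, weights w. A client profile
for a fixed FPP is a function cp :: vertex => facility => real; a full client
profile sigma maps every FPP to a client profile.\<close>

definition is_instance :: "nat set \<Rightarrow> (nat \<times> nat) set \<Rightarrow> (nat \<Rightarrow> real) \<Rightarrow> nat \<Rightarrow> (nat \<Rightarrow> nat set) \<Rightarrow> bool" where
  "is_instance V E w k U \<longleftrightarrow> finite V \<and> E \<subseteq> V \<times> V
     \<and> (\<forall>v\<in>V. w v \<in> \<rat> \<and> w v > 0)
     \<and> (\<forall>f\<in>{0..<k}. U f \<subseteq> V \<and> U f \<noteq> {})"

definition FPPs :: "nat \<Rightarrow> (nat \<Rightarrow> nat set) \<Rightarrow> (nat \<Rightarrow> nat) set" where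
  "FPPs k U = PiE {0..<k} U"

definition nbhd :: "(nat \<times> nat) set \<Rightarrow> nat \<Rightarrow> nat set" where
  "nbhd E v = {v} \<union> {u. (v, u) \<in> E}"

definition nbhd_fac :: "(nat \<times> nat) set \<Rightarrow> nat \<Rightarrow> (nat \<Rightarrow> nat) \<Rightarrow> nat \<Rightarrow> nat set" where
  "nbhd_fac E k s v = {f \<in> {0..<k}. s f \<in> nbhd E v}"

definition feasible_dist :: "(nat \<times> nat) set \<Rightarrow> nat \<Rightarrow> (nat \<Rightarrow> nat) \<Rightarrow> nat \<Rightarrow> (nat \<Rightarrow> real) \<Rightarrow> bool" where
  "feasible_dist E k s v d \<longleftrightarrow>
     (\<forall>f\<in>{0..<k}. 0 \<le> d f \<and> d f \<le> 1 \<and> (f \<notin> nbhd_fac E k s v \<longrightarrow> d f = 0))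
     \<and> (nbhd_fac E k s v \<noteq> {} \<longrightarrow> (\<Sum>f\<in>nbhd_fac E k s v. d f) = 1)"

definition client_profile :: "nat set \<Rightarrow> (nat \<times> nat) set \<Rightarrow> nat \<Rightarrow> (nat \<Rightarrow> nat) \<Rightarrow> (nat \<Rightarrow> nat \<Rightarrow> real) \<Rightarrow> bool" where
  "client_profile V E k s cp \<longleftrightarrow> (\<forall>v\<in>V. feasible_dist E k s v (cp v))"

definition load :: "nat set \<Rightarrow> (nat \<Rightarrow> real) \<Rightarrow> (nat \<Rightarrow> nat \<Rightarrow> real) \<Rightarrow> nat \<Rightarrow> real" where
  "load V w cp f = (\<Sum>v\<in>V. cp v f * w v)"

definition load_minus :: "nat set \<Rightarrow> (nat \<Rightarrow> real) \<Rightarrow> (nat \<Rightarrow> nat \<Rightarrow> real) \<Rightarrow> nat \<Rightarrow> nat \<Rightarrow> real" where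
  "load_minus V w cp v f = (\<Sum>u\<in>V - {v}. cp u f * w u)"

definition client_cost :: "nat set \<Rightarrow> (nat \<times> nat) set \<Rightarrow> (nat \<Rightarrow> real) \<Rightarrow> nat \<Rightarrow> (nat \<Rightarrow> nat) \<Rightarrow> (nat \<Rightarrow> nat \<Rightarrow> real) \<Rightarrow> nat \<Rightarrow> real" where
  "client_cost V E w k s cp v = w v + (\<Sum>f\<in>nbhd_fac E k s v. cp v f * load_minus V w cp v f)"

definition client_equilibrium :: "nat set \<Rightarrow> (nat \<times> nat) set \<Rightarrow> (nat \<Rightarrow> real) \<Rightarrow> nat \<Rightarrow> (nat \<Rightarrow> nat) \<Rightarrow> (nat \<Rightarrow> nat \<Rightarrow> real) \<Rightarrow> bool" where
  "client_equilibrium V E w k s cp \<longleftrightarrow> client_profile V E k s cp \<and>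
     (\<forall>v\<in>V. \<forall>d. feasible_dist E k s v d \<longrightarrow>
        \<not> (client_cost V E w k s (cp(v := d)) v < client_cost V E w k s cp v))"

definition full_client_equilibrium :: "nat set \<Rightarrow> (nat \<times> nat) set \<Rightarrow> (nat \<Rightarrow> real) \<Rightarrow> nat \<Rightarrow> (nat \<Rightarrow> nat set) \<Rightarrow> ((nat \<Rightarrow> nat) \<Rightarrow> nat \<Rightarrow> nat \<Rightarrow> real) \<Rightarrow> bool" where
  "full_client_equilibrium V E w k U \<sigma> \<longleftrightarrow> (\<forall>s'\<in>FPPs k U. client_equilibrium V E w k s' (\<sigma> s'))"

definition approx_SPE :: "real \<Rightarrow> nat set \<Rightarrow> (nat \<times> nat) set \<Rightarrow> (nat \<Rightarrow> real) \<Rightarrow> nat \<Rightarrow> (nat \<Rightarrow> nat set) \<Rightarrow> (nat \<Rightarrow> nat) \<Rightarrow> ((nat \<Rightarrow> nat) \<Rightarrow> nat \<Rightarrow> nat \<Rightarrow> real) \<Rightarrow> bool" where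
  "approx_SPE \<alpha> V E w k U s \<sigma> \<longleftrightarrow> s \<in> FPPs k U \<and> full_client_equilibrium V E w k U \<sigma> \<and>
     (\<forall>f\<in>{0..<k}. \<forall>x\<in>U f. \<not> (load V w (\<sigma> (s(f := x))) f > \<alpha> * load V w (\<sigma> s) f))"

end

theory Submission
  imports Defs
begin

text \<open>A single instance works for every \<open>\<epsilon>\<close>. Two facilities choose between
\<open>{0, 1}\<close> and \<open>{2, 3}\<close>; clients 0 to 3 only see their own vertex, client 4 sees
\<open>{0, 3}\<close> and client 5 sees \<open>{1, 2, 3}\<close>. Every client equilibrium is forced (a
contested client puts all its weight on the facility with the smaller load of the
others), so each of the four placement profiles has determined loads, and in each one
some facility can raise its load by a factor of at least \<open>53/31 > \<phi>\<close> by moving.\<close>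

lemma feasible_dist_uncontested:
  assumes "feasible_dist E k s v d" "card (nbhd_fac E k s v) \<le> 1" "g < k"
  shows "d g = of_bool (nbhd_fac E k s v = {g})"
proof -
  have "finite (nbhd_fac E k s v)" by (simp add: nbhd_fac_def)
  with assms(2) consider "nbhd_fac E k s v = {}" | f where "nbhd_fac E k s v = {f}"
    by (metis One_nat_def card_0_eq card_1_singletonE le_Suc_eq le_zero_eq)
  then show ?thesis
    using assms(1,3) unfolding feasible_dist_def by cases auto
qed

lemma client_equilibrium_uncontested:
  assumes "client_equilibrium V E w k s cp" "v \<in> V" "card (nbhd_fac E k s v) \<le> 1" "g < k"
  shows "cp v g = of_bool (nbhd_fac E k s v = {g})"
  using assms feasible_dist_uncontested
  by (simp add: client_equilibrium_def client_profile_def)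

lemma load_minus_eq_load:
  assumes "finite V" "v \<in> V"
  shows "load_minus V w cp v f = load V w cp f - cp v f * w v"
  using assms by (simp add: load_minus_def load_def sum_diff1)

lemma load_minus_fun_upd [simp]: "load_minus V w (cp(v := d)) v f = load_minus V w cp v f"
  unfolding load_minus_def by (rule sum.cong) auto

lemma client_equilibrium_prefers_lighter:
  assumes ce: "client_equilibrium V E w k s cp" and v: "v \<in> V"
    and nb: "nbhd_fac E k s v = {f, h}" "f \<noteq> h"
    and lighter: "load_minus V w cp v f < load_minus V w cp v h"
  shows "cp v f = 1" "cp v h = 0"
proof -
  have fh: "f < k" "h < k" using nb by (auto simp: nbhd_fac_def)
  have "feasible_dist E k s v (cp v)"
    using ce v by (simp add: client_equilibrium_def client_profile_def)
  then have split: "cp v f + cp v h = 1" "0 \<le> cp v f" "0 \<le> cp v h"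
    using nb fh by (auto simp: feasible_dist_def)
  define to_f where "to_f = (\<lambda>g::nat. if g = f then 1 else 0 :: real)"
  have "feasible_dist E k s v to_f"
    using nb fh by (auto simp: feasible_dist_def to_f_def)
  with ce v have "\<not> client_cost V E w k s (cp(v := to_f)) v < client_cost V E w k s cp v"
    by (simp add: client_equilibrium_def)
  then have no_gain: "cp v f * load_minus V w cp v f + cp v h * load_minus V w cp v h
      \<le> load_minus V w cp v f"
    using nb(2) by (simp add: client_cost_def nb to_f_def)
  have "load_minus V w cp v f + cp v h * (load_minus V w cp v h - load_minus V w cp v f)
      = cp v f * load_minus V w cp v f + cp v h * load_minus V w cp v h"
    using split(1) by (simp add: algebra_simps flip: eq_diff_eq)
  with no_gain have "cp v h * (load_minus V w cp v h - load_minus V w cp v f) \<le> 0"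
    by linarith
  with lighter have "cp v h \<le> 0"
    by (simp add: mult_le_0_iff)
  with split show "cp v f = 1" "cp v h = 0" by auto
qed

lemma FPPs_fun_upd:
  assumes "s \<in> FPPs k U" "f < k" "x \<in> U f"
  shows "s(f := x) \<in> FPPs k U"
  using assms PiE_fun_upd[of x U f s "{0..<k}"] by (simp add: FPPs_def insert_absorb)

lemma approx_SPE_deviation:
  assumes "approx_SPE \<alpha> V E w k U s \<sigma>" "f < k" "x \<in> U f"
  shows "client_equilibrium V E w k (s(f := x)) (\<sigma> (s(f := x)))"
    and "load V w (\<sigma> (s(f := x))) f \<le> \<alpha> * load V w (\<sigma> s) f"
  using assms FPPs_fun_upd
  by (auto simp: approx_SPE_def full_client_equilibrium_def not_less)

definition inst_V :: "nat set" where "inst_V = {0..5}"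

definition inst_E :: "(nat \<times> nat) set" where
  "inst_E = {(4, 0), (4, 3), (5, 1), (5, 2), (5, 3)}"

definition inst_w :: "nat \<Rightarrow> real" where "inst_w v = [11, 12, 23, 1, 10, 30] ! v"

definition inst_U :: "nat \<Rightarrow> nat set" where
  "inst_U f = (if f = 0 then {0, 1} else {2, 3})"

lemma is_instance_inst: "is_instance inst_V inst_E inst_w 2 inst_U"
  by (auto simp: is_instance_def inst_V_def inst_E_def inst_w_def inst_U_def numeral_eq_Suc
      less_Suc_eq_le[symmetric] less_Suc_eq)

lemma nbhd_fac_two_facilities:
  "nbhd_fac E 2 s v = (if s 0 \<in> nbhd E v then {0} else {}) \<union> (if s 1 \<in> nbhd E v then {1} else {})"
  by (auto simp: nbhd_fac_def dest: less_2_cases)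

lemma load_inst:
  "load inst_V inst_w cp f = 11 * cp 0 f + 12 * cp 1 f + 23 * cp 2 f + cp 3 f + 10 * cp 4 f + 30 * cp 5 f"
  by (simp add: load_def inst_V_def inst_w_def numeral_eq_Suc atLeast0AtMost)

lemma nbhd_inst: "nbhd inst_E v = (if v = 4 then {0, 3, 4} else if v = 5 then {1, 2, 3, 5} else {v})"
  by (auto simp: nbhd_def inst_E_def)

lemma load_minus_inst:
  "v \<le> 5 \<Longrightarrow> load_minus inst_V inst_w cp v f = load inst_V inst_w cp f - cp v f * inst_w v"
  by (simp add: load_minus_eq_load inst_V_def)

context
  fixes s :: "nat \<Rightarrow> nat" and cp :: "nat \<Rightarrow> nat \<Rightarrow> real"
  assumes ce: "client_equilibrium inst_V inst_E inst_w 2 s cp"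
begin

lemmas inst_cp_uncontested =
  client_equilibrium_uncontested[OF ce, unfolded nbhd_fac_two_facilities nbhd_inst inst_V_def]

lemma inst_loads_0_2:
  assumes "s 0 = 0" "s 1 = 2"
  shows "load inst_V inst_w cp 0 = 21" "load inst_V inst_w cp 1 = 53"
  using assms by (simp_all add: load_inst inst_cp_uncontested)

lemma inst_loads_0_3:
  assumes "s 0 = 0" "s 1 = 3"
  shows "load inst_V inst_w cp 0 = 21" "load inst_V inst_w cp 1 = 31"
proof -
  have "load_minus inst_V inst_w cp 4 0 < load_minus inst_V inst_w cp 4 1"
    using assms by (simp add: load_minus_inst load_inst inst_cp_uncontested inst_w_def)
  then have "cp 4 0 = 1" "cp 4 1 = 0"
    using client_equilibrium_prefers_lighter[OF ce, of 4 0 1] assms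
    by (simp_all add: nbhd_fac_two_facilities nbhd_inst inst_V_def)
  then show "load inst_V inst_w cp 0 = 21" "load inst_V inst_w cp 1 = 31"
    using assms by (simp_all add: load_inst inst_cp_uncontested)
qed

lemma inst_loads_1_2:
  assumes "s 0 = 1" "s 1 = 2"
  shows "load inst_V inst_w cp 0 = 42" "load inst_V inst_w cp 1 = 23"
proof -
  have "load_minus inst_V inst_w cp 5 0 < load_minus inst_V inst_w cp 5 1"
    using assms by (simp add: load_minus_inst load_inst inst_cp_uncontested inst_w_def)
  then have "cp 5 0 = 1" "cp 5 1 = 0"
    using client_equilibrium_prefers_lighter[OF ce, of 5 0 1] assms
    by (simp_all add: nbhd_fac_two_facilities nbhd_inst inst_V_def)
  then show "load inst_V inst_w cp 0 = 42" "load inst_V inst_w cp 1 = 23"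
    using assms by (simp_all add: load_inst inst_cp_uncontested)
qed

lemma inst_loads_1_3:
  assumes "s 0 = 1" "s 1 = 3"
  shows "load inst_V inst_w cp 0 = 12" "load inst_V inst_w cp 1 = 41"
proof -
  have "load_minus inst_V inst_w cp 5 1 < load_minus inst_V inst_w cp 5 0"
    using assms by (simp add: load_minus_inst load_inst inst_cp_uncontested inst_w_def)
  then have "cp 5 1 = 1" "cp 5 0 = 0"
    using client_equilibrium_prefers_lighter[OF ce, of 5 1 0] assms
    by (simp_all add: nbhd_fac_two_facilities nbhd_inst inst_V_def insert_commute)
  then show "load inst_V inst_w cp 0 = 12" "load inst_V inst_w cp 1 = 41"
    using assms by (simp_all add: load_inst inst_cp_uncontested)
qed

end

lemma inst_no_approx_SPE:
  assumes "\<alpha> < 53 / 31"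
  shows "\<not> approx_SPE \<alpha> inst_V inst_E inst_w 2 inst_U s \<sigma>"
proof
  assume spe: "approx_SPE \<alpha> inst_V inst_E inst_w 2 inst_U s \<sigma>"
  then have ce: "client_equilibrium inst_V inst_E inst_w 2 s (\<sigma> s)"
    and s: "s \<in> Pi\<^sub>E {0..<2} inst_U"
    by (auto simp: approx_SPE_def full_client_equilibrium_def FPPs_def)
  have s0: "s 0 \<in> {0, 1}" and s1: "s 1 \<in> {2, 3}"
    using PiE_mem[OF s, of 0] PiE_mem[OF s, of 1] by (simp_all add: inst_U_def)
  note ce_dev = approx_SPE_deviation(1)[OF spe] and dev = approx_SPE_deviation(2)[OF spe]
  from s0 s1 show False
  proof (elim insertE emptyE)
    assume "s 0 = 0" "s 1 = 2"
    with dev[of 0 1] inst_loads_0_2[OF ce] inst_loads_1_2[OF ce_dev[of 0 1]] assms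
    show False by (simp add: inst_U_def)
  next
    assume "s 0 = 0" "s 1 = 3"
    with dev[of 1 2] inst_loads_0_3[OF ce] inst_loads_0_2[OF ce_dev[of 1 2]] assms
    show False by (simp add: inst_U_def)
  next
    assume "s 0 = 1" "s 1 = 2"
    with dev[of 1 3] inst_loads_1_2[OF ce] inst_loads_1_3[OF ce_dev[of 1 3]] assms
    show False by (simp add: inst_U_def)
  next
    assume "s 0 = 1" "s 1 = 3"
    with dev[of 0 0] inst_loads_1_3[OF ce] inst_loads_0_3[OF ce_dev[of 0 0]] assms
    show False by (simp add: inst_U_def)
  qed
qed

lemma golden_ratio_less_53_div_31: "(1 + sqrt 5) / 2 < (53 / 31 :: real)"
proof -
  have "sqrt 5 < sqrt ((75 / 31)\<^sup>2)"
    by (simp add: power2_eq_square)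
  then show ?thesis by simp
qed

theorem mainTheorem3:
  fixes \<epsilon> :: real
  assumes "\<epsilon> > 0"
  shows "\<exists>V E w k U. is_instance V E w k U \<and>
           \<not> (\<exists>s \<sigma>. approx_SPE ((1 + sqrt 5) / 2 - \<epsilon>) V E w k U s \<sigma>)"
proof -
  have "(1 + sqrt 5) / 2 - \<epsilon> < 53 / 31"
    using golden_ratio_less_53_div_31 assms by linarith
  then show ?thesis
    using is_instance_inst inst_no_approx_SPE by blast
qed

end
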